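(* As $N\to\infty$, $$R_N:=\sum_{n=1}^N\Big\{\frac{1}{2^{2n}}\binom{2n}{n}\Big\}^2=\frac{\log N+\alpha}{\pi}+o(1),\qquad\alpha:=\gamma+\log16-\pi,$$ where $\gamma$ is the Euler–Mascheroni constant.
   Context: $\gamma=-\int_0^\infty\log u\,e^{-u}\mathrm du$. *)

theory Defs
  imports "HOL-Analysis.Analysis"
begin

end

(*
  With c_n = binom(2n,n)/4^n, Wallis' product gives 2/(2n+1) <= pi c_n^2 <= 1/n, so the
  defects d_n = 1/(n+1) - pi c_(n+1)^2 are nonnegative and O(1/n^2), and
  pi R_N = H_N - (d_0 + ... + d_(N-1)).  Since H_N - log N -> gamma, it remains to show
  sum d_n = pi - 4 log 2.  Integrating the binomial series of (1 - x sin^2 t)^(-1/2) termwise gives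
  sum pi c_n^2 x^n = 2 K(x), with K the complete elliptic integral of the first kind, whence
  sum d_n x^(n+1) = pi - 2 K(x) - log (1 - x).  Splitting the integrand of K as
  sin t / sqrt(..) + (1 - sin t) / sqrt(..), the first part has an elementary antiderivative and the
  second tends to log 2, which yields 2 K(x) + log (1 - x) -> 4 log 2 as x -> 1-.  For a series with
  nonnegative terms the Abel limit is the sum.
*)
theory Submission
  imports Defs "HOL-Real_Asymp.Real_Asymp"
begin

definition cbinom :: "nat \<Rightarrow> real" where
  "cbinom n = real ((2*n) choose n) / 2 ^ (2*n)"

lemma Suc_times_central_binomial:
  "Suc n * ((2 * Suc n) choose Suc n) = 2 * (2*n + 1) * ((2*n) choose n)"
  by (metis Suc_eq_plus1 Suc_times_binomial Suc_times_binomial_add add_2_eq_Suc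
      add_mult_distrib mult_Suc_right nat_mult_1 one_add_one)

lemma cbinom_0 [simp]: "cbinom 0 = 1"
  by (simp add: cbinom_def)

lemma cbinom_pos: "cbinom n > 0"
  by (simp add: cbinom_def)

lemma cbinom_Suc: "cbinom (Suc n) = cbinom n * ((2*real n + 1) / (2*real n + 2))"
proof -
  define C where "C = real ((2*n) choose n)"
  define C' where "C' = real ((2 * Suc n) choose Suc n)"
  have "real (Suc n) * C' = real (2 * (2*n + 1)) * C"
    unfolding C_def C'_def of_nat_mult[symmetric] Suc_times_central_binomial ..
  then have "(real n + 1) * C' = 2 * (2*real n + 1) * C"
    by (simp add: algebra_simps)
  then have C'_eq: "C' = 2 * (2*real n + 1) * C / (real n + 1)"
    by (simp add: eq_divide_eq add_pos_nonneg mult.commute)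
  have "2*(2*m - 1)*C/m/(4*Q) = C/Q*((2*m - 1)/(2*m))" if "m \<noteq> 0" "Q \<noteq> 0" for m Q :: real
    using that by (simp add: field_simps)
  from this[of "real n + 1" "2 ^ (2*n)"] show ?thesis
    unfolding cbinom_def C'_def[symmetric] C_def[symmetric] C'_eq by (simp add: algebra_simps)
qed

lemma cbinom_Suc_sq: "cbinom (Suc n)^2 = cbinom n^2 * ((2*real n + 1) / (2*real n + 2))^2"
  unfolding cbinom_Suc by (rule power_mult_distrib)

lemma cbinom_eq_gbinomial: "cbinom n = (-1)^n * ((-1/2 :: real) gchoose n)"
proof (induction n)
  case (Suc n)
  have "(-1/2::real) gchoose Suc n = -((2*real n + 1) / (2*real n + 2)) * ((-1/2) gchoose n)"
    using gbinomial_mult_1[of "-1/2::real" n] by (simp add: field_simps)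
  with Suc show ?case
    by (simp add: cbinom_Suc)
qed simp

lemma cbinom_sums:
  assumes "\<bar>z\<bar> < 1"
  shows "(\<lambda>n. cbinom n * z^n) sums (1 / sqrt (1 - z))"
proof -
  have "(\<lambda>n. ((-1/2) gchoose n) * (-z)^n) sums ((1 + -z) powr (-1/2))"
    using gen_binomial_real[of "-z" "-1/2"] assms by simp
  moreover have "((-1/2) gchoose n) * (-z)^n = cbinom n * z^n" for n
    unfolding cbinom_eq_gbinomial power_minus[of z] by (simp only: mult_ac)
  moreover have "(1 + -z) powr (-1/2) = 1 / sqrt (1 - z)"
    using assms by (simp add: powr_minus_divide powr_half_sqrt)
  ultimately show ?thesis
    by simp
qed

lemma wallis_partial_product_cbinom:
  "(2*real n + 1) * cbinom n^2 * (\<Prod>k=1..n. (4*real k^2) / (4*real k^2 - 1)) = 1"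
proof (induction n)
  case (Suc n)
  have sq: "4*(real n + 1)^2 = (2*real n + 2)^2"
    and diff_sq: "(2*real n + 2)^2 - 1 = (2*real n + 1) * (2*real n + 3)"
    by (simp_all add: power2_eq_square algebra_simps)
  have cancel: "c * (a/b)^2 * (b^2 / (a*c)) = a" if "a > 0" "b > 0" "c > 0" for a b c :: real
    using that by (simp add: field_simps power2_eq_square)
  have step: "(2*real n + 3) * ((2*real n + 1) / (2*real n + 2))^2
                * ((4*(real n + 1)^2) / (4*(real n + 1)^2 - 1)) = 2*real n + 1"
    unfolding sq diff_sq by (rule cancel) auto
  define A where "A = cbinom n^2"
  define P where "P = (\<Prod>k=1..n. (4*real k^2) / (4*real k^2 - 1))"
  have "(2*real (Suc n) + 1) * cbinom (Suc n)^2 * (\<Prod>k=1..Suc n. (4*real k^2) / (4*real k^2 - 1))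
      = (2*real n + 3) * (A * ((2*real n + 1) / (2*real n + 2))^2)
          * (P * ((4*(real n + 1)^2) / (4*(real n + 1)^2 - 1)))"
    unfolding A_def P_def cbinom_Suc_sq by (simp add: prod.nat_ivl_Suc' add_ac)
  also have "\<dots> = A * P * ((2*real n + 3) * ((2*real n + 1) / (2*real n + 2))^2
                * ((4*(real n + 1)^2) / (4*(real n + 1)^2 - 1)))"
    by (simp only: mult_ac)
  also have "\<dots> = (2*real n + 1) * A * P"
    unfolding step by (simp only: mult_ac)
  also have "\<dots> = 1"
    using Suc unfolding A_def P_def .
  finally show ?case .
qed simp

lemma wallis_cbinom: "(\<lambda>n. (2*real n + 1) * (pi * cbinom n^2)) \<longlonglongrightarrow> 2"
proof -
  have "(\<lambda>n. pi / (\<Prod>k=1..n. (4*real k^2) / (4*real k^2 - 1))) \<longlonglongrightarrow> pi / (pi/2)"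
    by (intro tendsto_intros wallis) simp
  moreover have "pi / (\<Prod>k=1..n. (4*real k^2) / (4*real k^2 - 1)) = (2*real n + 1) * (pi * cbinom n^2)"
    for n
  proof -
    define P where "P = (\<Prod>k=1..n. (4*real k^2) / (4*real k^2 - 1))"
    have "(2*real n + 1) * cbinom n^2 * P = 1"
      using wallis_partial_product_cbinom unfolding P_def .
    then have "(2*real n + 1) * cbinom n^2 = 1 / P"
      by (auto simp: eq_divide_eq)
    then have "(2*real n + 1) * (pi * cbinom n^2) = pi * (1 / P)"
      by (metis mult.left_commute)
    then show ?thesis
      unfolding P_def[symmetric] by simp
  qed
  ultimately show ?thesis
    by simp
qed

lemma pi_cbinom_sq_ge: "2 / (2*real n + 1) \<le> pi * cbinom n^2"
proof -
  have "decseq (\<lambda>n. (2*real n + 1) * (pi * cbinom n^2))"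
  proof (rule decseq_SucI)
    fix n
    have "(2*real n + 3) * (2*real n + 1)^2 \<le> (2*real n + 1) * (2*real n + 2)^2"
      by (simp add: power2_eq_square algebra_simps)
    then have "(2*real n + 3) * ((2*real n + 1) / (2*real n + 2))^2 * (pi * cbinom n^2)
                 \<le> (2*real n + 1) * (pi * cbinom n^2)"
      by (intro mult_right_mono) (simp_all add: power_divide field_simps)
    moreover have "(2*real (Suc n) + 1) * (pi * cbinom (Suc n)^2)
        = (2*real n + 3) * ((2*real n + 1) / (2*real n + 2))^2 * (pi * cbinom n^2)"
      unfolding cbinom_Suc_sq by (simp add: algebra_simps)
    ultimately show "(2*real (Suc n) + 1) * (pi * cbinom (Suc n)^2) \<le> (2*real n + 1) * (pi * cbinom n^2)"
      by simp
  qed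
  from decseq_ge[OF this wallis_cbinom, of n] show ?thesis
    by (simp add: field_simps)
qed

lemma pi_cbinom_sq_Suc_le: "pi * cbinom (Suc n)^2 \<le> 1 / (real n + 1)"
proof -
  have "incseq (\<lambda>n. (2*real n + 2) * (pi * cbinom (Suc n)^2))"
  proof (rule incseq_SucI)
    fix n
    have "(2*real n + 2) * (2*real n + 4)^2 \<le> (2*real n + 4) * (2*real n + 3)^2"
      by (simp add: power2_eq_square algebra_simps)
    then have "(2*real n + 2) * (pi * cbinom (Suc n)^2)
                 \<le> (2*real n + 4) * ((2*real n + 3) / (2*real n + 4))^2 * (pi * cbinom (Suc n)^2)"
      by (intro mult_right_mono) (simp_all add: power_divide field_simps)
    also have "\<dots> = (2*real (Suc n) + 2) * (pi * cbinom (Suc (Suc n))^2)"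
      unfolding cbinom_Suc_sq[of "Suc n"] by (simp add: algebra_simps)
    finally show "(2*real n + 2) * (pi * cbinom (Suc n)^2) \<le> (2*real (Suc n) + 2) * (pi * cbinom (Suc (Suc n))^2)" .
  qed
  moreover have "(\<lambda>n. (2*real n + 2) * (pi * cbinom (Suc n)^2)) \<longlonglongrightarrow> 1 * 2"
  proof -
    have "(\<lambda>n. (2*real n + 2) / (2*real n + 3) * ((2*real (Suc n) + 1) * (pi * cbinom (Suc n)^2)))
            \<longlonglongrightarrow> 1 * 2"
      by (intro tendsto_mult LIMSEQ_Suc[OF wallis_cbinom]) real_asymp
    moreover have "(\<lambda>n. (2*real n + 2) / (2*real n + 3) * ((2*real (Suc n) + 1) * (pi * cbinom (Suc n)^2)))
        = (\<lambda>n. (2*real n + 2) * (pi * cbinom (Suc n)^2))"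
      by (rule ext) (simp add: field_simps)
    ultimately show ?thesis
      by simp
  qed
  ultimately have "(2*real n + 2) * (pi * cbinom (Suc n)^2) \<le> 2"
    using incseq_le by fastforce
  then show ?thesis
    by (simp add: field_simps)
qed

lemma has_integral_sin_power_even:
  "((\<lambda>t. sin t ^ (2*n)) has_integral (pi/2 * cbinom n)) {0..pi/2}"
proof (induction n)
  case 0
  show ?case
    using has_integral_const_real[of "1::real" 0 "pi/2"] by simp
next
  case (Suc n)
  define F where "F t = - (sin t ^ (2*n + 1) * cos t)" for t :: real
  define F' where "F' t = (2*real n + 2) * sin t ^ (2*n + 2) - (2*real n + 1) * sin t ^ (2*n)"
    for t :: real
  have "(F has_real_derivative F' t) (at t)" for t
  proof -
    have cos_sq: "cos t * cos t = 1 - sin t ^ 2"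
      using sin_cos_squared_add[of t] by (simp add: power2_eq_square)
    have "- (real (2*n + 1) * sin t ^ (2*n) * cos t * cos t + sin t ^ (2*n + 1) * (- sin t))
        = - (real (2*n + 1) * sin t ^ (2*n) * (cos t * cos t) - sin t ^ (2*n) * sin t ^ 2)"
      by (simp add: power_add power2_eq_square algebra_simps)
    also have "\<dots> = F' t"
      unfolding cos_sq F'_def by (simp add: power_add power2_eq_square algebra_simps)
    finally have "- (real (2*n + 1) * sin t ^ (2*n) * cos t * cos t + sin t ^ (2*n + 1) * (- sin t))
        = F' t" .
    moreover have "(F has_real_derivative
            - (real (2*n + 1) * sin t ^ (2*n) * cos t * cos t + sin t ^ (2*n + 1) * (- sin t))) (at t)"
      unfolding F_def by (auto intro!: derivative_eq_intros simp del: power_Suc)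
    ultimately show ?thesis
      by simp
  qed
  then have "(F' has_integral (F (pi/2) - F 0)) {0..pi/2}"
    by (intro fundamental_theorem_of_calculus)
       (auto simp: has_real_derivative_iff_has_vector_derivative has_vector_derivative_at_within)
  then have "(F' has_integral 0) {0..pi/2}"
    by (simp add: F_def)
  from has_integral_add[OF this has_integral_mult_right[OF Suc, of "2*real n + 1"]]
  have "((\<lambda>t. (2*real n + 2) * sin t ^ (2 * Suc n)) has_integral ((2*real n + 1) * (pi/2 * cbinom n)))
          {0..pi/2}"
    by (simp add: F'_def)
  from has_integral_mult_right[OF this, of "1 / (2*real n + 2)"]
  have "((\<lambda>t. sin t ^ (2 * Suc n)) has_integral
          (1 / (2*real n + 2) * ((2*real n + 1) * (pi/2 * cbinom n)))) {0..pi/2}"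
    unfolding mult.assoc[symmetric, of "1 / (2*real n + 2)" "2*real n + 2"] by simp
  then show ?case
    by (simp add: cbinom_Suc mult_ac)
qed

definition elliptic_K :: "real \<Rightarrow> real" where
  "elliptic_K m = integral {0..pi/2} (\<lambda>t. 1 / sqrt (1 - m * sin t ^ 2))"

lemma mult_sin_sq_le:
  fixes m t :: real
  shows "0 \<le> m \<Longrightarrow> m * sin t ^ 2 \<le> m"
  using mult_left_le[of "sin t ^ 2" m] by (simp add: abs_square_le_1)

lemma elliptic_radicand_pos:
  fixes m t :: real
  shows "0 \<le> m \<Longrightarrow> m < 1 \<Longrightarrow> 0 < 1 - m * sin t ^ 2"
  using mult_sin_sq_le[of m t] by simp

lemma cbinom_sin_power_sums:
  fixes m t :: real
  assumes m: "0 \<le> m" "m < 1"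
  shows "(\<lambda>n. cbinom n * m^n * sin t ^ (2*n)) sums (1 / sqrt (1 - m * sin t ^ 2))"
proof -
  have "\<bar>m * sin t ^ 2\<bar> < 1"
    using elliptic_radicand_pos[OF m, of t] m by simp
  from cbinom_sums[OF this] show ?thesis
    by (simp add: power_mult_distrib power_mult mult.assoc)
qed

lemma elliptic_K_sums:
  assumes m: "0 \<le> m" "m < 1"
  shows "(\<lambda>n. pi * cbinom n^2 * m^n) sums (2 * elliptic_K m)"
proof -
  define g where "g t = 1 / sqrt (1 - m * sin t ^ 2)" for t :: real
  define f where "f k t = (\<Sum>n<k. cbinom n * m^n * sin t ^ (2*n))" for k t
  have terms_sums: "(\<lambda>n. cbinom n * m^n * sin t ^ (2*n)) sums g t" for t
    unfolding g_def using m by (rule cbinom_sin_power_sums)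
  have terms_nonneg: "0 \<le> cbinom n * m^n * sin t ^ (2*n)" for n t
    using cbinom_pos[of n] m by (simp add: power_mult)
  have "norm (f k t) \<le> 1 / sqrt (1 - m)" for k t
  proof -
    have "f k t \<le> g t"
      unfolding f_def sums_unique[OF terms_sums]
      by (intro sum_le_suminf sums_summable[OF terms_sums] terms_nonneg) auto
    moreover have "g t \<le> 1 / sqrt (1 - m)"
    proof -
      have "sqrt (1 - m) \<le> sqrt (1 - m * sin t ^ 2)"
        using mult_sin_sq_le[OF m(1)] by simp
      then show ?thesis
        unfolding g_def using m by (simp add: frac_le)
    qed
    moreover have "0 \<le> f k t"
      unfolding f_def by (intro sum_nonneg terms_nonneg)
    ultimately show ?thesis
      by simp
  qed
  moreover have f_integral: "(f k has_integral (\<Sum>n<k. pi/2 * cbinom n^2 * m^n)) {0..pi/2}" for k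
  proof -
    have "((\<lambda>t. cbinom n * m^n * sin t ^ (2*n)) has_integral (pi/2 * cbinom n^2 * m^n)) {0..pi/2}" for n
      using has_integral_mult_right[OF has_integral_sin_power_even, of "cbinom n * m^n" n]
      by (simp add: power2_eq_square mult_ac)
    then show ?thesis
      unfolding f_def by (intro has_integral_sum) auto
  qed
  ultimately have "(\<lambda>k. integral {0..pi/2} (f k)) \<longlonglongrightarrow> integral {0..pi/2} g"
    using terms_sums unfolding sums_def f_def[symmetric]
    by (intro dominated_convergence(2)[where h = "\<lambda>_. 1 / sqrt (1 - m)"])
       (auto simp: integrable_on_def)
  then have "(\<lambda>n. pi/2 * cbinom n^2 * m^n) sums elliptic_K m"
    unfolding sums_def elliptic_K_def g_def[abs_def] integral_unique[OF f_integral] .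
  from sums_mult[OF this, of 2] show ?thesis
    by (simp add: mult_ac)
qed

lemma has_integral_sin_div_elliptic_radical:
  assumes w: "0 < w" "w < 1"
  shows "((\<lambda>t. sin t / sqrt (1 - w^2 * sin t ^ 2)) has_integral
           ((ln (1 + w) - ln (sqrt (1 - w^2))) / w)) {0..pi/2}"
proof -
  define F where "F = (\<lambda>t. - ln (w * cos t + sqrt (1 - w^2 * sin t ^ 2)) / w)"
  have "w^2 < 1"
    using w by (simp add: power_less_one_iff)
  then have radicand_pos: "0 < 1 - w^2 * sin t ^ 2" for t
    using elliptic_radicand_pos[of "w^2" t] by simp
  have "(F has_real_derivative sin t / sqrt (1 - w^2 * sin t ^ 2)) (at t)" if t: "t \<in> {0..pi/2}" for t
  proof -
    define s where "s = sqrt (1 - w^2 * sin t ^ 2)"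
    define d where "d = w * cos t + s"
    have "0 < s"
      unfolding s_def using radicand_pos by simp
    moreover have "0 \<le> cos t"
      using t by (intro cos_ge_zero) auto
    ultimately have "0 < d"
      unfolding d_def using w by (simp add: add_nonneg_pos)
    have "((\<lambda>t. 1 - w^2 * sin t ^ 2) has_real_derivative - (2 * w^2 * cos t * sin t)) (at t)"
      by (auto intro!: derivative_eq_intros)
    from DERIV_chain2[OF DERIV_real_sqrt[OF radicand_pos[of t]] this]
    have "((\<lambda>t. sqrt (1 - w^2 * sin t ^ 2)) has_real_derivative - (w^2 * cos t * sin t / s)) (at t)"
      unfolding s_def[symmetric] by (rule DERIV_cong) (use \<open>0 < s\<close> in \<open>simp add: field_simps\<close>)
    from DERIV_add[OF DERIV_cmult[OF DERIV_cos, of w] this]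
    have "((\<lambda>t. w * cos t + sqrt (1 - w^2 * sin t ^ 2)) has_real_derivative - (w * sin t * d / s)) (at t)"
      unfolding d_def
      by (rule DERIV_cong) (use \<open>0 < s\<close> in \<open>simp add: field_simps power2_eq_square\<close>)
    from DERIV_chain2[OF DERIV_ln[OF \<open>0 < d\<close>[unfolded d_def s_def]] this]
    have "((\<lambda>t. ln (w * cos t + sqrt (1 - w^2 * sin t ^ 2))) has_real_derivative - (w * sin t / s)) (at t)"
      unfolding s_def[symmetric] d_def[symmetric]
      by (rule DERIV_cong) (use \<open>0 < s\<close> \<open>0 < d\<close> in \<open>simp add: field_simps\<close>)
    from DERIV_cdivide[OF DERIV_minus[OF this], of w] show ?thesis
      unfolding F_def s_def[symmetric] by (rule DERIV_cong) (use w in simp)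
  qed
  then have "((\<lambda>t. sin t / sqrt (1 - w^2 * sin t ^ 2)) has_integral (F (pi/2) - F 0)) {0..pi/2}"
    by (intro fundamental_theorem_of_calculus)
       (auto simp: has_real_derivative_iff_has_vector_derivative has_vector_derivative_at_within)
  moreover have "F (pi/2) - F 0 = (ln (1 + w) - ln (sqrt (1 - w^2))) / w"
    unfolding F_def by (simp add: diff_divide_distrib add.commute)
  ultimately show ?thesis
    by simp
qed

lemma has_integral_cos_div_one_plus_sin: "((\<lambda>t. cos t / (1 + sin t)) has_integral ln 2) {0..pi/2}"
proof -
  have "((\<lambda>t. ln (1 + sin t)) has_real_derivative cos t / (1 + sin t)) (at t)"
    if "t \<in> {0..pi/2}" for t
  proof -
    have "0 \<le> sin t"
      using that by (intro sin_ge_zero) auto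
    then show ?thesis
      by (auto intro!: derivative_eq_intros simp: divide_inverse)
  qed
  then have "((\<lambda>t. cos t / (1 + sin t)) has_integral (ln (1 + sin (pi/2)) - ln (1 + sin 0))) {0..pi/2}"
    by (intro fundamental_theorem_of_calculus)
       (auto simp: has_real_derivative_iff_has_vector_derivative has_vector_derivative_at_within)
  then show ?thesis
    by simp
qed

lemma eventually_at_left_1_in_unit_interval: "eventually (\<lambda>x. x \<in> {0<..<1}) (at_left (1::real))"
  by (rule eventually_at_left_real) simp

lemma elliptic_remainder_integrand_bound:
  fixes m t :: real
  assumes m: "0 \<le> m" "m < 1" and "0 \<le> sin t"
  shows "\<bar>(1 - sin t) / sqrt (1 - m * sin t ^ 2)\<bar> \<le> 1"
proof -
  \<comment> \<open>\<open>(1 - s)\<^sup>2 \<le> 1 - s\<^sup>2 \<le> 1 - m s\<^sup>2\<close> for \<open>0 \<le> s \<le> 1\<close>\<close>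
  have "m * sin t ^ 2 \<le> sin t ^ 2"
    using m by (intro mult_left_le_one_le) auto
  moreover have "sin t ^ 2 \<le> sin t"
    using \<open>0 \<le> sin t\<close> by (simp add: power2_eq_square mult_left_le)
  ultimately have "(1 - sin t)^2 \<le> 1 - m * sin t ^ 2"
    by (simp add: power2_eq_square algebra_simps)
  then have "1 - sin t \<le> sqrt (1 - m * sin t ^ 2)"
    by (rule real_le_rsqrt)
  then show ?thesis
    using elliptic_radicand_pos[OF m, of t] by simp
qed

lemma elliptic_remainder_integrand_tendsto:
  fixes t :: real
  assumes t: "t \<in> {0..pi/2}" and f: "(f \<longlongrightarrow> 1) F"
  shows "((\<lambda>x. (1 - sin t) / sqrt (1 - f x * sin t ^ 2)) \<longlongrightarrow> cos t / (1 + sin t)) F"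
proof (cases "cos t = 0")
  case True
  moreover have "0 \<le> sin t"
    using t by (intro sin_ge_zero) auto
  ultimately have "sin t = 1"
    using sin_cos_squared_add[of t] by (simp add: power2_eq_1_iff)
  with True show ?thesis
    by simp
next
  case False
  have "0 \<le> cos t" "0 \<le> sin t"
    using t by (auto intro: cos_ge_zero sin_ge_zero)
  have "sqrt (1 - 1 * sin t ^ 2) = cos t"
    using \<open>0 \<le> cos t\<close> by (simp add: cos_squared_eq[symmetric])
  moreover have "(1 - sin t) * (1 + sin t) = cos t * cos t"
    using sin_cos_squared_add[of t] by (simp add: power2_eq_square algebra_simps)
  ultimately have "(1 - sin t) / sqrt (1 - 1 * sin t ^ 2) = cos t / (1 + sin t)"
    using False \<open>0 \<le> sin t\<close> by (simp add: field_simps)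
  moreover have "((\<lambda>x. (1 - sin t) / sqrt (1 - f x * sin t ^ 2))
                   \<longlongrightarrow> (1 - sin t) / sqrt (1 - 1 * sin t ^ 2)) F"
    using False f \<open>sqrt (1 - 1 * sin t ^ 2) = cos t\<close> by (intro tendsto_intros) auto
  ultimately show ?thesis
    by simp
qed

lemma elliptic_remainder_tendsto:
  "((\<lambda>m. integral {0..pi/2} (\<lambda>t. (1 - sin t) / sqrt (1 - m * sin t ^ 2))) \<longlongrightarrow> ln 2) (at_left 1)"
proof (rule tendsto_at_left_sequentially[of 0])
  fix S :: "nat \<Rightarrow> real"
  assume S: "\<And>k. S k < 1" "\<And>k. 0 < S k" and "S \<longlonglongrightarrow> 1"
  have "(\<lambda>k. integral {0..pi/2} (\<lambda>t. (1 - sin t) / sqrt (1 - S k * sin t ^ 2)))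
          \<longlonglongrightarrow> integral {0..pi/2} (\<lambda>t. cos t / (1 + sin t))"
  proof (rule dominated_convergence(2)[where h = "\<lambda>_. 1"])
    fix k
    show "(\<lambda>t. (1 - sin t) / sqrt (1 - S k * sin t ^ 2)) integrable_on {0..pi/2}"
      using elliptic_radicand_pos[of "S k"] S[of k]
      by (intro integrable_continuous_interval continuous_intros) (auto simp: less_le)
    fix t :: real
    assume "t \<in> {0..pi/2}"
    then show "norm ((1 - sin t) / sqrt (1 - S k * sin t ^ 2)) \<le> 1"
      using S[of k] by (intro elliptic_remainder_integrand_bound[unfolded real_norm_def[symmetric]])
                       (auto intro: sin_ge_zero less_imp_le)
  next
    fix t :: real
    assume "t \<in> {0..pi/2}"
    then show "(\<lambda>k. (1 - sin t) / sqrt (1 - S k * sin t ^ 2)) \<longlonglongrightarrow> cos t / (1 + sin t)"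
      using \<open>S \<longlonglongrightarrow> 1\<close> by (rule elliptic_remainder_integrand_tendsto)
  qed (auto intro: integrable_continuous_interval)
  then show "(\<lambda>k. integral {0..pi/2} (\<lambda>t. (1 - sin t) / sqrt (1 - S k * sin t ^ 2))) \<longlonglongrightarrow> ln 2"
    using has_integral_cos_div_one_plus_sin by (simp add: integral_unique)
qed simp

lemma elliptic_K_split:
  assumes "0 < m" "m < 1"
  shows "elliptic_K m = (ln (1 + sqrt m) - ln (sqrt (1 - m))) / sqrt m
           + integral {0..pi/2} (\<lambda>t. (1 - sin t) / sqrt (1 - m * sin t ^ 2))"
proof -
  have "((\<lambda>t. sin t / sqrt (1 - m * sin t ^ 2)) has_integral
          ((ln (1 + sqrt m) - ln (sqrt (1 - m))) / sqrt m)) {0..pi/2}"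
    using has_integral_sin_div_elliptic_radical[of "sqrt m"] assms by simp
  moreover have "(\<lambda>t. (1 - sin t) / sqrt (1 - m * sin t ^ 2)) integrable_on {0..pi/2}"
    using elliptic_radicand_pos[of m] assms
    by (intro integrable_continuous_interval continuous_intros) (auto simp: less_le)
  ultimately have "((\<lambda>t. sin t / sqrt (1 - m * sin t ^ 2) + (1 - sin t) / sqrt (1 - m * sin t ^ 2))
      has_integral ((ln (1 + sqrt m) - ln (sqrt (1 - m))) / sqrt m
           + integral {0..pi/2} (\<lambda>t. (1 - sin t) / sqrt (1 - m * sin t ^ 2)))) {0..pi/2}"
    by (intro has_integral_add) (auto simp: has_integral_integral)
  then show ?thesis
    unfolding elliptic_K_def add_divide_distrib[symmetric] by (simp add: integral_unique)
qed

lemma elliptic_K_asymptotics: "((\<lambda>m. 2 * elliptic_K m + ln (1 - m)) \<longlongrightarrow> 4 * ln 2) (at_left 1)"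
proof -
  have "((\<lambda>m. 2 * ((ln (1 + sqrt m) - ln (sqrt (1 - m))) / sqrt m) + ln (1 - m)) \<longlongrightarrow> 2 * ln 2)
          (at_left 1)"
    by real_asymp
  from tendsto_add[OF this tendsto_mult_left[OF elliptic_remainder_tendsto, of 2]]
  have "((\<lambda>m. 2 * ((ln (1 + sqrt m) - ln (sqrt (1 - m))) / sqrt m) + ln (1 - m)
           + 2 * integral {0..pi/2} (\<lambda>t. (1 - sin t) / sqrt (1 - m * sin t ^ 2)))
          \<longlongrightarrow> 4 * ln 2) (at_left 1)" (is "(?f \<longlongrightarrow> _) _")
    by simp
  moreover have "eventually (\<lambda>m. ?f m = 2 * elliptic_K m + ln (1 - m)) (at_left 1)"
    using eventually_at_left_1_in_unit_interval
    by eventually_elim (simp add: elliptic_K_split algebra_simps)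
  ultimately show ?thesis
    by (rule Lim_transform_eventually)
qed

lemma suminf_eq_Abel_limit_nonneg:
  fixes a :: "nat \<Rightarrow> real"
  assumes nonneg: "\<And>n. 0 \<le> a n" and "summable a"
    and Abel_limit: "((\<lambda>x. \<Sum>n. a n * x^n) \<longlongrightarrow> L) (at_left 1)"
  shows "suminf a = L"
proof (rule antisym)
  have terms_le: "a n * x^n \<le> a n" and terms_nonneg: "0 \<le> a n * x^n"
    if "x \<in> {0<..<1}" for x n
    using that nonneg[of n] by (auto intro!: mult_left_le power_le_one)
  have summable: "summable (\<lambda>n. a n * x^n)" if "x \<in> {0<..<1}" for x
    using terms_le[OF that] terms_nonneg[OF that]
    by (intro summable_comparison_test'[OF \<open>summable a\<close>]) auto
  show "suminf a \<le> L"
  proof (rule suminf_le_const[OF \<open>summable a\<close>])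
    fix M
    have "((\<lambda>x. \<Sum>n<M. a n * x^n) \<longlongrightarrow> (\<Sum>n<M. a n * 1^n)) (at_left 1)"
      by (intro tendsto_intros)
    moreover have "eventually (\<lambda>x. (\<Sum>n<M. a n * x^n) \<le> (\<Sum>n. a n * x^n)) (at_left 1)"
      using eventually_at_left_1_in_unit_interval
      by eventually_elim (intro sum_le_suminf summable terms_nonneg; simp)
    ultimately show "(\<Sum>n<M. a n) \<le> L"
      using Abel_limit by (intro tendsto_le[OF trivial_limit_at_left_real]) simp_all
  qed
  have "eventually (\<lambda>x. (\<Sum>n. a n * x^n) \<le> suminf a) (at_left 1)"
    using eventually_at_left_1_in_unit_interval
    by eventually_elim (intro suminf_le summable \<open>summable a\<close> terms_le; simp)
  then show "L \<le> suminf a"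
    using Abel_limit by (intro tendsto_upperbound[OF _ _ trivial_limit_at_left_real])
qed

definition cbinom_defect :: "nat \<Rightarrow> real" where
  "cbinom_defect n = 1 / (real n + 1) - pi * cbinom (Suc n)^2"

lemma cbinom_defect_nonneg: "0 \<le> cbinom_defect n"
  using pi_cbinom_sq_Suc_le[of n] by (simp add: cbinom_defect_def)

lemma cbinom_defect_le: "cbinom_defect n \<le> 1 / (real n + 1)^2"
proof -
  have "1 / (real n + 1) - 2 / (2*real (Suc n) + 1) = 1 / ((real n + 1) * (2*real n + 3))"
    by (simp add: field_simps)
  also have "\<dots> \<le> 1 / (real n + 1)^2"
    by (intro divide_left_mono) (auto simp: power2_eq_square intro!: mult_left_mono)
  finally show ?thesis
    using pi_cbinom_sq_ge[of "Suc n"] by (simp add: cbinom_defect_def)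
qed

lemma summable_cbinom_defect: "summable cbinom_defect"
proof (rule summable_comparison_test')
  show "summable (\<lambda>n. 1 / (real n + 1)^2)"
    using summable_Suc_iff[THEN iffD2, OF inverse_power_summable[of 2, where 'a = real]]
    by (simp add: inverse_eq_divide add.commute)
  show "norm (cbinom_defect n) \<le> 1 / (real n + 1)^2" for n
    using cbinom_defect_nonneg[of n] cbinom_defect_le[of n] by simp
qed

lemma cbinom_defect_sums:
  assumes x: "0 < x" "x < 1"
  shows "(\<lambda>n. cbinom_defect n * x^n) sums ((pi - 2 * elliptic_K x - ln (1 - x)) / x)"
proof -
  have "(\<lambda>n. pi * cbinom (Suc n)^2 * x^Suc n) sums (2 * elliptic_K x - pi)"
    using elliptic_K_sums[of x] x by (subst sums_Suc_iff) simp
  moreover have "(\<lambda>n. x^Suc n / real (Suc n)) sums - ln (1 - x)"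
    using ln_series'[of "-x"] x sums_Suc_iff[of "\<lambda>n. x^n / real n"] sums_minus
    by fastforce
  ultimately have "(\<lambda>n. cbinom_defect n * x^Suc n) sums (pi - 2 * elliptic_K x - ln (1 - x))"
    unfolding cbinom_defect_def using sums_diff by (fastforce simp: algebra_simps)
  from sums_divide[OF this, of x] show ?thesis
    using x by simp
qed

lemma suminf_cbinom_defect: "suminf cbinom_defect = pi - 4 * ln 2"
proof (rule suminf_eq_Abel_limit_nonneg[OF cbinom_defect_nonneg summable_cbinom_defect])
  have "((\<lambda>x. (pi - 2 * elliptic_K x - ln (1 - x)) / x) \<longlongrightarrow> (pi - 4 * ln 2) / 1) (at_left 1)"
    unfolding diff_diff_eq by (intro tendsto_intros elliptic_K_asymptotics) simp
  moreover have "eventually (\<lambda>x. (pi - 2 * elliptic_K x - ln (1 - x)) / x = (\<Sum>n. cbinom_defect n * x^n))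
               (at_left 1)"
    using eventually_at_left_1_in_unit_interval
    by eventually_elim (auto intro: sums_unique cbinom_defect_sums)
  ultimately show "((\<lambda>x. \<Sum>n. cbinom_defect n * x^n) \<longlongrightarrow> pi - 4 * ln 2) (at_left 1)"
    by (auto intro: Lim_transform_eventually)
qed

lemma sum_cbinom_sq_eq_harm: "(\<Sum>n=1..N. cbinom n^2) = (harm N - (\<Sum>n<N. cbinom_defect n)) / pi"
proof -
  have "harm N - (\<Sum>n<N. cbinom_defect n) = (\<Sum>n<N. pi * cbinom (Suc n)^2)"
    by (simp add: harm_altdef cbinom_defect_def sum_subtractf inverse_eq_divide add.commute)
  also have "\<dots> = (\<Sum>n=1..N. pi * cbinom n^2)"
    by (rule sum_bounds_lt_plus1)
  also have "\<dots> = pi * (\<Sum>n=1..N. cbinom n^2)"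
    by (simp add: sum_distrib_left)
  finally show ?thesis
    by simp
qed

theorem mainTheorem11:
  shows "(\<lambda>N::nat. (\<Sum>n=1..N. (real ((2*n) choose n) / 2 ^ (2*n))\<^sup>2)
            - (ln (real N) + (euler_mascheroni + ln 16 - pi)) / pi) \<longlonglongrightarrow> 0"
proof -
  have partial_sum: "(\<Sum>n=1..N. (real ((2*n) choose n) / 2 ^ (2*n))\<^sup>2)
      = (harm N - (\<Sum>n<N. cbinom_defect n)) / pi" for N
    unfolding cbinom_def[symmetric] by (rule sum_cbinom_sq_eq_harm)
  have ln_16: "ln (16::real) = 4 * ln 2"
    using ln_realpow[of 2 4] by simp
  have "(\<lambda>N. ((harm N - ln (real N) - euler_mascheroni)
              - ((\<Sum>n<N. cbinom_defect n) - suminf cbinom_defect)) / pi) \<longlonglongrightarrow> (0 - 0) / pi"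
    using euler_mascheroni_LIMSEQ summable_LIMSEQ[OF summable_cbinom_defect]
    by (intro tendsto_intros) (simp_all add: LIM_zero)
  moreover have "(\<lambda>N. ((harm N - ln (real N) - euler_mascheroni)
              - ((\<Sum>n<N. cbinom_defect n) - suminf cbinom_defect)) / pi)
      = (\<lambda>N. (\<Sum>n=1..N. (real ((2*n) choose n) / 2 ^ (2*n))\<^sup>2)
            - (ln (real N) + (euler_mascheroni + ln 16 - pi)) / pi)"
    unfolding partial_sum suminf_cbinom_defect ln_16 by (rule ext) (simp add: field_simps)
  ultimately show ?thesis
    by simp
qed

end
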